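(* The adjoint $W^*$ restricts to an affine homeomorphism (weak* topologies) of $\mathcal{M}_1$ onto $\mathcal{L}_1$, and to an affine homeomorphism of $\mathcal{R}$ onto $\mathcal{C}$.
   Context: $L^{\infty}(\mathbb{R}_+)$, $L^{\infty}(\mathbb{R}_+^{\times})$: real-valued essentially bounded measurable functions on $[0,\infty)$ and $[1,\infty)$. A mean is a positive linear functional with value $1$ at $1$. $W:L^{\infty}(\mathbb{R}_+^{\times})\to L^{\infty}(\mathbb{R}_+)$, $(Wf)(x)=f(e^x)$, and $(W^*\varphi)(f)=\varphi(Wf)$. $\mathcal{M}_1$: means $\varphi$ on $L^{\infty}(\mathbb{R}_+)$ with $\varphi(f)\le\lim_{\theta\to\infty}\limsup_{x\to\infty}\frac1\theta\int_x^{x+\theta}f\,dt$ for all $f$. $\mathcal{R}$: means $\varphi$ on $L^{\infty}(\mathbb{R}_+)$ with $\varphi(f)\le\limsup_{x\to\infty}e^{-x}\int_0^xf(t)e^t\,dt$ for all $f$. $\mathcal{L}_1$: means $\psi$ on $L^{\infty}(\mathbb{R}_+^{\times})$ with $\psi(f)\le\lim_{\theta\to\infty}\limsup_{x\to\infty}\frac{1}{\log\theta}\int_x^{\theta x}f(t)\frac{dt}{t}$ for all $f$. $\mathcal{C}$: means $\psi$ on $L^{\infty}(\mathbb{R}_+^{\times})$ with $\psi(f)\le\limsup_{x\to\infty}\frac1x\int_1^xf(t)\,dt$ for all $f$. *)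

theory Defs
  imports "HOL-Analysis.Analysis"
begin

text \<open>Elements are representatives; means are required to
  be positive w.r.t. a.e. order, hence automatically respect a.e. equality.\<close>
definition Linf :: "real set \<Rightarrow> (real \<Rightarrow> real) set" where
  "Linf S = {f. f \<in> borel_measurable (lebesgue_on S) \<and>
                 (\<exists>C. AE x in lebesgue_on S. \<bar>f x\<bar> \<le> C)}"

text \<open>Means: positive linear functionals with value 1 at the constant 1, stored as
  extensional functions on Linf S (points of the weak* topology space).\<close>
definition mean :: "real set \<Rightarrow> ((real \<Rightarrow> real) \<Rightarrow> real) \<Rightarrow> bool" where
  "mean S \<phi> \<longleftrightarrow> \<phi> \<in> extensional (Linf S) \<and>
     (\<forall>f\<in>Linf S. \<forall>g\<in>Linf S. \<phi> (\<lambda>x. f x + g x) = \<phi> f + \<phi> g) \<and>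
     (\<forall>c. \<forall>f\<in>Linf S. \<phi> (\<lambda>x. c * f x) = c * \<phi> f) \<and>
     (\<forall>f\<in>Linf S. (AE x in lebesgue_on S. 0 \<le> f x) \<longrightarrow> 0 \<le> \<phi> f) \<and>
     \<phi> (\<lambda>x. 1) = 1"

definition weak_star :: "real set \<Rightarrow> ((real \<Rightarrow> real) \<Rightarrow> real) topology" where
  "weak_star S = product_topology (\<lambda>_. euclideanreal) (Linf S)"

abbreviation "Rplus \<equiv> {0::real..}"
abbreviation "Rtimes \<equiv> {1::real..}"

definition Wstar :: "((real \<Rightarrow> real) \<Rightarrow> real) \<Rightarrow> ((real \<Rightarrow> real) \<Rightarrow> real)" where
  "Wstar \<phi> = restrict (\<lambda>f. \<phi> (\<lambda>x. f (exp x))) (Linf Rtimes)"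

definition M1 :: "((real \<Rightarrow> real) \<Rightarrow> real) set" where
  "M1 = {\<phi>. mean Rplus \<phi> \<and> (\<forall>f\<in>Linf Rplus.
     ereal (\<phi> f) \<le> Lim at_top (\<lambda>\<theta>. Limsup at_top (\<lambda>x.
        ereal ((1/\<theta>) * integral\<^sup>L (lebesgue_on {x..x+\<theta>}) f))))}"

definition RR :: "((real \<Rightarrow> real) \<Rightarrow> real) set" where
  "RR = {\<phi>. mean Rplus \<phi> \<and> (\<forall>f\<in>Linf Rplus.
     ereal (\<phi> f) \<le> Limsup at_top (\<lambda>x.
        ereal (exp (-x) * integral\<^sup>L (lebesgue_on {0..x}) (\<lambda>t. f t * exp t))))}"

definition L1 :: "((real \<Rightarrow> real) \<Rightarrow> real) set" where
  "L1 = {\<psi>. mean Rtimes \<psi> \<and> (\<forall>f\<in>Linf Rtimes.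
     ereal (\<psi> f) \<le> Lim at_top (\<lambda>\<theta>. Limsup at_top (\<lambda>x.
        ereal ((1 / ln \<theta>) * integral\<^sup>L (lebesgue_on {x..\<theta>*x}) (\<lambda>t. f t / t)))))}"

definition CC :: "((real \<Rightarrow> real) \<Rightarrow> real) set" where
  "CC = {\<psi>. mean Rtimes \<psi> \<and> (\<forall>f\<in>Linf Rtimes.
     ereal (\<psi> f) \<le> Limsup at_top (\<lambda>x.
        ereal ((1/x) * integral\<^sup>L (lebesgue_on {1..x}) f)))}"

definition cvx :: "'a set \<Rightarrow> real \<Rightarrow> ('a \<Rightarrow> real) \<Rightarrow> ('a \<Rightarrow> real) \<Rightarrow> ('a \<Rightarrow> real)" where
  "cvx I t \<phi> \<psi> = restrict (\<lambda>f. t * \<phi> f + (1 - t) * \<psi> f) I"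

definition Wstar_affine_on :: "((real \<Rightarrow> real) \<Rightarrow> real) set \<Rightarrow> bool" where
  "Wstar_affine_on K \<longleftrightarrow> (\<forall>\<phi>\<in>K. \<forall>\<psi>\<in>K. \<forall>t\<in>{0..1}.
      Wstar (cvx (Linf Rplus) t \<phi> \<psi>) = cvx (Linf Rtimes) t (Wstar \<phi>) (Wstar \<psi>))"

end

theory Submission
  imports Defs
begin

text \<open>
  The substitution t = e^s turns the windows [x, \<theta>x] of the multiplicative group into the
  windows [log x, log x + log \<theta>] of the additive one, with dt/t = ds, and turns the
  Cesaro average (1/x) \<integral>[1,x] f into e^(-s) \<integral>[0,s] f(e^u) e^u du. So composition with exp carries
  the upper functional defining L1 (resp. CC) to the one defining M1 (resp. RR),
  and W* maps each set of dominated means onto the other, with inverse the adjoint of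
  composition with log. Both adjoints are continuous for the topologies of pointwise
  convergence, and adjoints of linear maps are affine.
\<close>

lemma Linf_add: "f \<in> Linf S \<Longrightarrow> g \<in> Linf S \<Longrightarrow> (\<lambda>x. f x + g x) \<in> Linf S"
proof -
  assume "f \<in> Linf S" "g \<in> Linf S"
  then obtain C D where "f \<in> borel_measurable (lebesgue_on S)" "g \<in> borel_measurable (lebesgue_on S)"
    and "AE x in lebesgue_on S. \<bar>f x\<bar> \<le> C" "AE x in lebesgue_on S. \<bar>g x\<bar> \<le> D"
    by (auto simp: Linf_def)
  moreover from this(3,4) have "AE x in lebesgue_on S. \<bar>f x + g x\<bar> \<le> C + D"
    by eventually_elim auto
  ultimately show ?thesis by (auto simp: Linf_def)
qed

lemma Linf_cmult: "f \<in> Linf S \<Longrightarrow> (\<lambda>x. c * f x) \<in> Linf S"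
proof -
  assume "f \<in> Linf S"
  then obtain C where "f \<in> borel_measurable (lebesgue_on S)" and "AE x in lebesgue_on S. \<bar>f x\<bar> \<le> C"
    by (auto simp: Linf_def)
  moreover from this(2) have "AE x in lebesgue_on S. \<bar>c * f x\<bar> \<le> \<bar>c\<bar> * C"
    by eventually_elim (auto simp: abs_mult intro: mult_left_mono)
  ultimately show ?thesis by (auto simp: Linf_def)
qed

lemma Linf_const: "(\<lambda>x. c) \<in> Linf S"
  unfolding Linf_def by auto

lemma mean_cong:
  assumes m: "mean S \<phi>" and f: "f \<in> Linf S" and g: "g \<in> Linf S" and eq: "\<And>x. x \<in> S \<Longrightarrow> f x = g x"
  shows "\<phi> f = \<phi> g"
proof -
  from m have add: "\<And>a b. a \<in> Linf S \<Longrightarrow> b \<in> Linf S \<Longrightarrow> \<phi> (\<lambda>x. a x + b x) = \<phi> a + \<phi> b"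
    and mult: "\<And>c a. a \<in> Linf S \<Longrightarrow> \<phi> (\<lambda>x. c * a x) = c * \<phi> a"
    and pos: "\<And>a. a \<in> Linf S \<Longrightarrow> (AE x in lebesgue_on S. 0 \<le> a x) \<Longrightarrow> 0 \<le> \<phi> a"
    by (auto simp: mean_def)
  define d where "d = (\<lambda>x. f x + (-1) * g x)"
  have d: "d \<in> Linf S" unfolding d_def by (intro Linf_add Linf_cmult f g)
  have d0: "AE x in lebesgue_on S. d x = 0" using eq by (intro AE_I2) (simp add: d_def)
  have "0 \<le> \<phi> d" by (rule pos[OF d], rule eventually_mono[OF d0]) simp
  moreover have "0 \<le> \<phi> (\<lambda>x. (-1) * d x)"
    by (rule pos[OF Linf_cmult[OF d]], rule eventually_mono[OF d0]) simp
  ultimately have "\<phi> d = 0" using mult[OF d, of "-1"] by simp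
  moreover have "\<phi> d = \<phi> f + (-1) * \<phi> g"
    unfolding d_def by (simp only: add[OF f Linf_cmult[OF g]] mult[OF g])
  ultimately show ?thesis by simp
qed

lemma integrable_Linf_interval:
  fixes f :: "real \<Rightarrow> real"
  assumes f: "f \<in> Linf S" and S: "S \<in> sets lebesgue" and sub: "{c..d} \<subseteq> S"
  shows "integrable (lebesgue_on {c..d}) f"
proof -
  from f obtain C where m: "f \<in> borel_measurable (lebesgue_on S)"
    and bound: "AE x in lebesgue_on S. \<bar>f x\<bar> \<le> C"
    by (auto simp: Linf_def)
  have "AE x in lebesgue. x \<in> S \<longrightarrow> \<bar>f x\<bar> \<le> C"
    using bound S by (simp add: AE_restrict_space_iff)
  then have "AE x in lebesgue_on {c..d}. norm (f x) \<le> C"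
    using sub by (auto simp: AE_restrict_space_iff elim!: eventually_mono)
  moreover have "finite_measure (lebesgue_on {c..d})"
    by (simp add: finite_measure_lebesgue_on)
  ultimately show ?thesis
    using finite_measure.integrable_const_bound measurable_restrict_mono[OF m sub] by blast
qed

definition comp_adjoint ::
    "real set \<Rightarrow> (real \<Rightarrow> real) \<Rightarrow> ((real \<Rightarrow> real) \<Rightarrow> real) \<Rightarrow> ((real \<Rightarrow> real) \<Rightarrow> real)" where
  "comp_adjoint T h \<phi> = restrict (\<lambda>f. \<phi> (\<lambda>x. f (h x))) (Linf T)"

definition dominated_means :: "real set \<Rightarrow> ((real \<Rightarrow> real) \<Rightarrow> ereal) \<Rightarrow> ((real \<Rightarrow> real) \<Rightarrow> real) set" where
  "dominated_means S P = {\<phi>. mean S \<phi> \<and> (\<forall>f\<in>Linf S. ereal (\<phi> f) \<le> P f)}"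

locale lebesgue_pullback =
  fixes S T :: "real set" and h k :: "real \<Rightarrow> real"
  assumes sets_S: "S \<in> sets lebesgue" and sets_T: "T \<in> sets lebesgue"
    and maps_to: "\<And>x. x \<in> S \<Longrightarrow> h x \<in> T" and left_inverse: "\<And>x. x \<in> S \<Longrightarrow> k (h x) = x"
    and inverse_maps_to: "\<And>y. y \<in> T \<Longrightarrow> k y \<in> S" and right_inverse: "\<And>y. y \<in> T \<Longrightarrow> h (k y) = y"
    and differentiable_inverse: "k differentiable_on T"
begin

lemma image_inverse: "k ` A = {x \<in> S. h x \<in> A}" if "A \<subseteq> T"
  using that maps_to left_inverse inverse_maps_to right_inverse by (auto intro!: image_eqI)

text \<open>The preimage under h of a null set is its image under the differentiable map k.\<close>
lemma AE_pullback:
  assumes "AE y in lebesgue_on T. P y"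
  shows "AE x in lebesgue_on S. P (h x)"
proof -
  obtain N where N: "{y \<in> T. \<not> P y} \<subseteq> N" "N \<in> null_sets (lebesgue_on T)"
    using AE_E[OF assms] null_setsI by (metis space_lebesgue_on)
  then have NT: "N \<subseteq> T" and "negligible N"
    using null_sets_restrict_space[OF sets_T, of N] negligible_iff_null_sets by auto
  then have "negligible (k ` N)"
    by (intro negligible_differentiable_image_negligible differentiable_on_subset[OF differentiable_inverse]) auto
  then have "k ` N \<in> null_sets (lebesgue_on S)"
    using null_sets_restrict_space[OF sets_S, of "k ` N"] image_inverse[OF NT] negligible_iff_null_sets
    by auto
  moreover have "{x \<in> S. \<not> P (h x)} \<subseteq> k ` N"
    using N(1) image_inverse[OF NT] maps_to by auto
  ultimately show ?thesis
    using AE_I'[of "k ` N" "lebesgue_on S" "\<lambda>x. P (h x)"] by simp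
qed

lemma measurable_pullback:
  fixes f :: "real \<Rightarrow> real"
  assumes f: "f \<in> borel_measurable (lebesgue_on T)"
  shows "(\<lambda>x. f (h x)) \<in> borel_measurable (lebesgue_on S)"
proof (rule borel_measurableI)
  fix B :: "real set" assume "open B"
  then have "f -` B \<inter> T \<in> sets (lebesgue_on T)"
    using measurable_sets[OF f] by auto
  then have "k ` (f -` B \<inter> T) \<in> sets (lebesgue_on (k ` T))"
    by (intro differentiable_image_in_sets_lebesgue_on[OF sets_T _ _ differentiable_inverse]) auto
  moreover have "k ` T = S" "k ` (f -` B \<inter> T) = (\<lambda>x. f (h x)) -` B \<inter> S"
    using image_inverse[of T] image_inverse[of "f -` B \<inter> T"] maps_to by auto
  ultimately show "(\<lambda>x. f (h x)) -` B \<inter> space (lebesgue_on S) \<in> sets (lebesgue_on S)"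
    by simp
qed

lemma Linf_pullback: "f \<in> Linf T \<Longrightarrow> (\<lambda>x. f (h x)) \<in> Linf S"
  unfolding Linf_def using measurable_pullback AE_pullback by blast

lemma mean_comp_adjoint:
  assumes m: "mean S \<phi>"
  shows "mean T (comp_adjoint T h \<phi>)"
proof -
  from m have add: "\<And>a b. a \<in> Linf S \<Longrightarrow> b \<in> Linf S \<Longrightarrow> \<phi> (\<lambda>x. a x + b x) = \<phi> a + \<phi> b"
    and mult: "\<And>c a. a \<in> Linf S \<Longrightarrow> \<phi> (\<lambda>x. c * a x) = c * \<phi> a"
    and pos: "\<And>a. a \<in> Linf S \<Longrightarrow> (AE x in lebesgue_on S. 0 \<le> a x) \<Longrightarrow> 0 \<le> \<phi> a"
    and one: "\<phi> (\<lambda>x. 1) = 1"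
    by (auto simp: mean_def)
  show ?thesis
    unfolding mean_def comp_adjoint_def
  proof (intro conjI ballI allI impI)
    fix f assume f: "f \<in> Linf T" and nonneg: "AE y in lebesgue_on T. 0 \<le> f y"
    then show "0 \<le> restrict (\<lambda>f. \<phi> (\<lambda>x. f (h x))) (Linf T) f"
      using pos[OF Linf_pullback[OF f] AE_pullback[OF nonneg]] by simp
  qed (use add mult one Linf_pullback Linf_add Linf_cmult Linf_const in simp_all)
qed

lemma continuous_map_comp_adjoint:
  "continuous_map (subtopology (weak_star S) A) (weak_star T) (comp_adjoint T h)"
  unfolding weak_star_def continuous_map_componentwise
proof (intro conjI ballI)
  show "comp_adjoint T h ` topspace (subtopology (product_topology (\<lambda>_. euclideanreal) (Linf S)) A)
      \<subseteq> extensional (Linf T)"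
    by (auto simp: comp_adjoint_def)
  fix f assume f: "f \<in> Linf T"
  have "continuous_map (subtopology (product_topology (\<lambda>_. euclideanreal) (Linf S)) A) euclideanreal
      (\<lambda>\<phi>. \<phi> (\<lambda>x. f (h x)))"
    by (intro continuous_map_from_subtopology continuous_map_product_projection Linf_pullback f)
  then show "continuous_map (subtopology (product_topology (\<lambda>_. euclideanreal) (Linf S)) A) euclideanreal
      (\<lambda>\<phi>. comp_adjoint T h \<phi> f)"
    using f by (simp add: comp_adjoint_def)
qed

lemma comp_adjoint_cvx:
  "comp_adjoint T h (cvx (Linf S) t \<phi> \<psi>) = cvx (Linf T) t (comp_adjoint T h \<phi>) (comp_adjoint T h \<psi>)"
  unfolding comp_adjoint_def cvx_def by (intro restrict_ext) (simp add: Linf_pullback)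

lemma comp_adjoint_dominated_means:
  assumes "\<phi> \<in> dominated_means S P" and "\<And>f. f \<in> Linf T \<Longrightarrow> Q f = P (\<lambda>x. f (h x))"
  shows "comp_adjoint T h \<phi> \<in> dominated_means T Q"
  using assms mean_comp_adjoint Linf_pullback by (auto simp: dominated_means_def comp_adjoint_def)

end

lemma comp_adjoint_inverse:
  assumes "lebesgue_pullback S T h k" "lebesgue_pullback T S k h" and m: "mean S \<phi>"
  shows "comp_adjoint S k (comp_adjoint T h \<phi>) = \<phi>"
proof (rule extensionalityI)
  interpret h: lebesgue_pullback S T h k by fact
  interpret k: lebesgue_pullback T S k h by fact
  show "\<phi> \<in> extensional (Linf S)" using m by (simp add: mean_def)
  fix g assume g: "g \<in> Linf S"
  have "comp_adjoint S k (comp_adjoint T h \<phi>) g = \<phi> (\<lambda>x. g (k (h x)))"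
    using g k.Linf_pullback by (simp add: comp_adjoint_def)
  also have "\<dots> = \<phi> g"
    using g by (intro mean_cong[OF m] h.Linf_pullback k.Linf_pullback) (simp_all add: h.left_inverse)
  finally show "comp_adjoint S k (comp_adjoint T h \<phi>) g = \<phi> g" .
qed (simp add: comp_adjoint_def)

lemma homeomorphic_map_dominated_means:
  assumes h: "lebesgue_pullback S T h k" and k: "lebesgue_pullback T S k h"
    and Q: "\<And>f. f \<in> Linf T \<Longrightarrow> Q f = P (\<lambda>x. f (h x))"
    and P: "\<And>g. g \<in> Linf S \<Longrightarrow> P g = Q (\<lambda>y. g (k y))"
  shows "homeomorphic_map (subtopology (weak_star S) (dominated_means S P))
           (subtopology (weak_star T) (dominated_means T Q)) (comp_adjoint T h)"
  unfolding homeomorphic_map_maps homeomorphic_maps_def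
proof (intro exI[of _ "comp_adjoint S k"] conjI ballI)
  interpret h: lebesgue_pullback S T h k by fact
  interpret k: lebesgue_pullback T S k h by fact
  show "continuous_map (subtopology (weak_star S) (dominated_means S P))
      (subtopology (weak_star T) (dominated_means T Q)) (comp_adjoint T h)"
    using h.continuous_map_comp_adjoint h.comp_adjoint_dominated_means[where P=P and Q=Q, OF _ Q]
    by (auto simp: continuous_map_in_subtopology)
  show "continuous_map (subtopology (weak_star T) (dominated_means T Q))
      (subtopology (weak_star S) (dominated_means S P)) (comp_adjoint S k)"
    using k.continuous_map_comp_adjoint k.comp_adjoint_dominated_means[where P=Q and Q=P, OF _ P]
    by (auto simp: continuous_map_in_subtopology)
  show "comp_adjoint S k (comp_adjoint T h \<phi>) = \<phi>"
    if "\<phi> \<in> topspace (subtopology (weak_star S) (dominated_means S P))" for \<phi>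
    using that comp_adjoint_inverse[OF h k] by (simp add: dominated_means_def)
  show "comp_adjoint T h (comp_adjoint S k \<psi>) = \<psi>"
    if "\<psi> \<in> topspace (subtopology (weak_star T) (dominated_means T Q))" for \<psi>
    using that comp_adjoint_inverse[OF k h] by (simp add: dominated_means_def)
qed

lemma lebesgue_pullback_exp: "lebesgue_pullback Rplus Rtimes exp ln"
proof unfold_locales
  have "ln differentiable at x" if "1 \<le> x" for x :: real
    using DERIV_ln[of x] that by (auto simp: real_differentiable_def)
  then show "ln differentiable_on Rtimes"
    by (auto intro: differentiable_at_imp_differentiable_on)
qed auto

lemma lebesgue_pullback_ln: "lebesgue_pullback Rtimes Rplus ln exp"
  by unfold_locales (auto intro!: differentiable_at_imp_differentiable_on DERIV_exp
      simp: real_differentiable_def)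

lemma Wstar_eq_comp_adjoint: "Wstar = comp_adjoint Rtimes exp"
  by (rule ext) (simp add: Wstar_def comp_adjoint_def)

lemma Limsup_at_top_exp: "Limsup at_top (\<lambda>x. H (exp x)) = Limsup at_top (H :: real \<Rightarrow> ereal)"
  using Limsup_filtermap_ge[where f=exp and F=at_top and g=H]
    Limsup_filtermap_le[where f=exp and F=at_top and g=H]
  by (simp add: filtermap_exp_at_top inj_on_def)

lemma Lim_at_top_exp: "Lim at_top (\<lambda>x. G (exp x)) = Lim at_top (G :: real \<Rightarrow> ereal)"
  unfolding t2_space_class.Lim_def by (metis filterlim_filtermap filtermap_exp_at_top)

lemma exp_image_interval: "exp ` {a..b} = {exp a..exp (b::real)}"
proof (intro equalityI subsetI)
  fix y assume y: "y \<in> {exp a..exp b}"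
  then have "0 < y" by (metis atLeastAtMost_iff exp_gt_zero less_le_trans)
  moreover from this y have "ln y \<in> {a..b}"
    by (metis atLeastAtMost_iff exp_le_cancel_iff exp_ln)
  ultimately show "y \<in> exp ` {a..b}"
    by (intro image_eqI[of _ _ "ln y"]) auto
qed auto

lemma integral_exp_substitution:
  fixes F :: "real \<Rightarrow> real"
  assumes int: "integrable (lebesgue_on {exp a..exp b}) F"
  shows "integral\<^sup>L (lebesgue_on {exp a..exp b}) F = integral\<^sup>L (lebesgue_on {a..b}) (\<lambda>s. exp s * F (exp s))"
proof -
  have "F absolutely_integrable_on exp ` {a..b}"
    using int by (simp add: exp_image_interval absolutely_integrable_on_def set_integrable_def
        integrable_restrict_space)
  then have "(\<lambda>s. \<bar>exp s\<bar> * F (exp s)) absolutely_integrable_on {a..b}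
      \<and> integral {a..b} (\<lambda>s. \<bar>exp s\<bar> * F (exp s)) = integral (exp ` {a..b}) F"
    by (intro has_absolute_integral_change_of_variables_1'[THEN iffD2])
       (auto intro!: derivative_eq_intros inj_onI)
  then have "integrable (lebesgue_on {a..b}) (\<lambda>s. exp s * F (exp s))"
    and "integral {a..b} (\<lambda>s. exp s * F (exp s)) = integral {exp a..exp b} F"
    by (simp_all add: exp_image_interval absolutely_integrable_on_def set_integrable_def
        integrable_restrict_space)
  with int show ?thesis
    by (simp add: lebesgue_integral_eq_integral)
qed

definition upper_banach_mean :: "(real \<Rightarrow> real) \<Rightarrow> ereal" where
  "upper_banach_mean f = Lim at_top (\<lambda>\<theta>. Limsup at_top (\<lambda>x.
     ereal ((1/\<theta>) * integral\<^sup>L (lebesgue_on {x..x+\<theta>}) f)))"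

definition upper_log_banach_mean :: "(real \<Rightarrow> real) \<Rightarrow> ereal" where
  "upper_log_banach_mean f = Lim at_top (\<lambda>\<theta>. Limsup at_top (\<lambda>x.
     ereal ((1 / ln \<theta>) * integral\<^sup>L (lebesgue_on {x..\<theta>*x}) (\<lambda>t. f t / t))))"

definition upper_exp_mean :: "(real \<Rightarrow> real) \<Rightarrow> ereal" where
  "upper_exp_mean f = Limsup at_top (\<lambda>x.
     ereal (exp (-x) * integral\<^sup>L (lebesgue_on {0..x}) (\<lambda>t. f t * exp t)))"

definition upper_cesaro_mean :: "(real \<Rightarrow> real) \<Rightarrow> ereal" where
  "upper_cesaro_mean f = Limsup at_top (\<lambda>x. ereal ((1/x) * integral\<^sup>L (lebesgue_on {1..x}) f))"

lemma M1_eq: "M1 = dominated_means Rplus upper_banach_mean"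
  by (simp add: M1_def dominated_means_def upper_banach_mean_def)

lemma L1_eq: "L1 = dominated_means Rtimes upper_log_banach_mean"
  by (simp add: L1_def dominated_means_def upper_log_banach_mean_def)

lemma RR_eq: "RR = dominated_means Rplus upper_exp_mean"
  by (simp add: RR_def dominated_means_def upper_exp_mean_def)

lemma CC_eq: "CC = dominated_means Rtimes upper_cesaro_mean"
  by (simp add: CC_def dominated_means_def upper_cesaro_mean_def)

lemma Linf_Rtimes_divide:
  assumes f: "f \<in> Linf Rtimes"
  shows "(\<lambda>t. f t / t) \<in> Linf Rtimes"
proof -
  from f obtain C where m: "f \<in> borel_measurable (lebesgue_on Rtimes)"
    and bound: "AE t in lebesgue_on Rtimes. \<bar>f t\<bar> \<le> C"
    by (auto simp: Linf_def)
  have "(\<lambda>t. f t / t) \<in> borel_measurable (lebesgue_on Rtimes)"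
    using id_borel_measurable_lebesgue_on[of Rtimes] unfolding id_def
    by (rule borel_measurable_divide[OF m])
  moreover have "AE t in lebesgue_on Rtimes. 1 \<le> t"
    by (rule AE_I2) simp
  with bound have "AE t in lebesgue_on Rtimes. \<bar>f t / t\<bar> \<le> C"
  proof eventually_elim
    case (elim t)
    then have "\<bar>f t / t\<bar> \<le> \<bar>f t\<bar>" by (simp add: abs_div divide_le_eq mult_le_cancel_left1)
    with elim show ?case by simp
  qed
  ultimately show ?thesis by (auto simp: Linf_def)
qed

lemma upper_log_banach_mean_eq:
  assumes f: "f \<in> Linf Rtimes"
  shows "upper_log_banach_mean f = upper_banach_mean (\<lambda>s. f (exp s))"
proof -
  have window: "integral\<^sup>L (lebesgue_on {exp x..exp \<theta> * exp x}) (\<lambda>t. f t / t)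
      = integral\<^sup>L (lebesgue_on {x..x+\<theta>}) (\<lambda>s. f (exp s))" if "0 \<le> \<theta>" "0 \<le> x" for \<theta> x
  proof -
    have "integrable (lebesgue_on {exp x..exp (x+\<theta>)}) (\<lambda>t. f t / t)"
      using that by (intro integrable_Linf_interval[OF Linf_Rtimes_divide[OF f]]) auto
    then show ?thesis
      by (simp add: integral_exp_substitution exp_add[symmetric] add.commute)
  qed
  define L where "L \<theta> x = ereal ((1 / ln \<theta>) * integral\<^sup>L (lebesgue_on {x..\<theta>*x}) (\<lambda>t. f t / t))"
    for \<theta> x
  have "upper_log_banach_mean f = Lim at_top (\<lambda>\<theta>. Limsup at_top (L (exp \<theta>)))"
    unfolding upper_log_banach_mean_def L_def by (rule Lim_at_top_exp[symmetric])
  also have "\<dots> = Lim at_top (\<lambda>\<theta>. Limsup at_top (\<lambda>x. L (exp \<theta>) (exp x)))"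
    by (simp only: Limsup_at_top_exp)
  also have "\<dots> = upper_banach_mean (\<lambda>s. f (exp s))"
    unfolding upper_banach_mean_def L_def
    by (intro Lim_cong[OF _ refl] Limsup_eq eventually_mono[OF eventually_ge_at_top[of 0]])
       (simp add: window)
  finally show ?thesis .
qed

lemma upper_cesaro_mean_eq:
  assumes f: "f \<in> Linf Rtimes"
  shows "upper_cesaro_mean f = upper_exp_mean (\<lambda>s. f (exp s))"
proof -
  have average: "integral\<^sup>L (lebesgue_on {1..exp x}) f
      = integral\<^sup>L (lebesgue_on {0..x}) (\<lambda>s. f (exp s) * exp s)" if "0 \<le> x" for x
  proof -
    have "integrable (lebesgue_on {exp 0..exp x}) f"
      by (intro integrable_Linf_interval[OF f]) auto
    then show ?thesis
      using integral_exp_substitution[of 0 x f] by (simp add: mult.commute)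
  qed
  have "upper_cesaro_mean f
      = Limsup at_top (\<lambda>x. ereal ((1 / exp x) * integral\<^sup>L (lebesgue_on {1..exp x}) f))"
    unfolding upper_cesaro_mean_def by (rule Limsup_at_top_exp[symmetric])
  also have "\<dots> = upper_exp_mean (\<lambda>s. f (exp s))"
    unfolding upper_exp_mean_def
    by (intro Limsup_eq eventually_mono[OF eventually_ge_at_top[of 0]])
       (simp add: average exp_minus inverse_eq_divide)
  finally show ?thesis .
qed

theorem theorem4p2:
  shows "homeomorphic_map (subtopology (weak_star Rplus) M1) (subtopology (weak_star Rtimes) L1) Wstar
       \<and> Wstar_affine_on M1
       \<and> homeomorphic_map (subtopology (weak_star Rplus) RR) (subtopology (weak_star Rtimes) CC) Wstar
       \<and> Wstar_affine_on RR"
proof (intro conjI)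
  interpret exp: lebesgue_pullback Rplus Rtimes exp ln by (rule lebesgue_pullback_exp)
  interpret ln: lebesgue_pullback Rtimes Rplus ln exp by (rule lebesgue_pullback_ln)
  have affine: "Wstar_affine_on K" for K
    by (simp add: Wstar_affine_on_def Wstar_eq_comp_adjoint exp.comp_adjoint_cvx)
  show "Wstar_affine_on M1" "Wstar_affine_on RR" by (rule affine)+
  show "homeomorphic_map (subtopology (weak_star Rplus) M1) (subtopology (weak_star Rtimes) L1) Wstar"
    unfolding M1_eq L1_eq Wstar_eq_comp_adjoint
    using upper_log_banach_mean_eq[OF ln.Linf_pullback]
    by (intro homeomorphic_map_dominated_means[OF lebesgue_pullback_exp lebesgue_pullback_ln]
        upper_log_banach_mean_eq) simp_all
  show "homeomorphic_map (subtopology (weak_star Rplus) RR) (subtopology (weak_star Rtimes) CC) Wstar"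
    unfolding RR_eq CC_eq Wstar_eq_comp_adjoint
    using upper_cesaro_mean_eq[OF ln.Linf_pullback]
    by (intro homeomorphic_map_dominated_means[OF lebesgue_pullback_exp lebesgue_pullback_ln]
        upper_cesaro_mean_eq) simp_all
qed

end
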